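(* Consider class-incremental learning with pre-training in the setting described in the context. Suppose $\mathbb{E}_{\boldsymbol{x}}[H_{\rm WTP}(\boldsymbol{x})]\le\delta$, $\mathbb{E}_{\boldsymbol{x}}[H_{\rm TII}(\boldsymbol{x})]\le\epsilon$ and $\mathbb{E}_{\boldsymbol{x}}[H_{\rm TAP}(\boldsymbol{x})]\le\eta$. Then the loss error satisfies $\mathcal{L}\in[0,\max\{\delta+\epsilon,\eta\}]$. This holds regardless of whether the within-task prediction, task-identity inference and task-adaptive prediction distributions are trained together or separately.
   Context: Class-incremental setting: tasks $1,\dots,t$ with training sets $\mathcal{D}=\{\mathcal{D}_1,\dots,\mathcal{D}_t\}$, input domains $\mathcal{X}_k=\bigcup_j \mathcal{X}_{k,j}$ and pairwise disjoint label sets $\mathcal{Y}_k=\{\mathcal{Y}_{k,j}\}_{j=1}^{|\mathcal{Y}_k|}$ ($\mathcal{Y}_k\cap\mathcal{Y}_{k'}=\emptyset$ for $k\ne k'$), where $\mathcal{X}_{k,j}$ is the domain of the $j$-th class of task $k$; $\theta$ are the parameters of a pre-trained backbone. For a class $c\in\bigcup_{k\le t}\mathcal{Y}_k$, $\mathcal{X}^c$ denotes the domain of class $c$. For a sample $\boldsymbol{x}\in\bigcup_{k\le t}\mathcal{X}_k$, let $\bar i$ be its true task index, $\bar j$ its true within-task class index, and $y=\mathcal{Y}_{\bar i,\bar j}$ its true label. The model specifies: a task-identity inference (TII) distribution $\{P(\boldsymbol{x}\in\mathcal{X}_i\mid\mathcal{D},\theta)\}_{i=1}^t$; for each task $i$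 a within-task prediction (WTP) distribution $\{P(\boldsymbol{x}\in\mathcal{X}_{i,j}\mid\boldsymbol{x}\in\mathcal{X}_i,\mathcal{D},\theta)\}_j$; the induced joint prediction $P(\boldsymbol{x}\in\mathcal{X}_{i,j}\mid\mathcal{D},\theta)=P(\boldsymbol{x}\in\mathcal{X}_{i,j}\mid\boldsymbol{x}\in\mathcal{X}_i,\mathcal{D},\theta)\,P(\boldsymbol{x}\in\mathcal{X}_i\mid\mathcal{D},\theta)$; and a task-adaptive prediction (TAP) distribution $\{P(\boldsymbol{x}\in\mathcal{X}^c\mid\mathcal{D},\theta)\}_c$ over all observed classes. With $\mathcal{H}(p,q)=-\sum_i p_i\log q_i$ and $\boldsymbol{1}_\cdot$ one-hot encoding, define $H_{\rm WTP}(\boldsymbol{x})=\mathcal{H}(\boldsymbol{1}_{\bar j},\{P(\boldsymbol{x}\in\mathcal{X}_{\bar i,j}\mid\boldsymbol{x}\in\mathcal{X}_{\bar i},\mathcal{D},\theta)\}_j)$, $H_{\rm TII}(\boldsymbol{x})=\mathcal{H}(\boldsymbol{1}_{\bar i},\{P(\boldsymbol{x}\in\mathcal{X}_i\mid\mathcal{D},\theta)\}_i)$, $H_{\rm TAP}(\boldsymbol{x})=\mathcal{H}(\boldsymbol{1}_{y},\{P(\boldsymbol{x}\in\mathcal{X}^c\mid\mathcal{D},\theta)\}_c)$. The goal is the multi-objective problem $\max[P(\boldsymbol{x}\in\mathcal{X}_{\bar i,\bar j}\mid\mathcal{D},\theta),P(\boldsymbol{x}\in\mathcal{X}^y\mid\mathcal{D},\theta)]$,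 and the loss error is $\mathcal{L}=\max\{\mathbb{E}_{\boldsymbol{x}}[\mathcal{H}(\boldsymbol{1}_{\bar i,\bar j},\{P(\boldsymbol{x}\in\mathcal{X}_{i,j}\mid\mathcal{D},\theta)\}_{i,j})],\ \mathbb{E}_{\boldsymbol{x}}[H_{\rm TAP}(\boldsymbol{x})]\}$. *)

theory Defs
  imports "HOL-Probability.Probability"
begin

definition xent :: "'i set \<Rightarrow> ('i \<Rightarrow> real) \<Rightarrow> ('i \<Rightarrow> real) \<Rightarrow> real" where
  "xent I p q = - (\<Sum>i\<in>I. p i * ln (q i))"

definition onehot :: "'i \<Rightarrow> 'i \<Rightarrow> real" where
  "onehot a = (\<lambda>i. if i = a then 1 else 0)"

definition is_distr :: "'i set \<Rightarrow> ('i \<Rightarrow> real) \<Rightarrow> bool" where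
  "is_distr I q \<longleftrightarrow> finite I \<and> (\<forall>i\<in>I. 0 \<le> q i) \<and> sum q I = 1"

end

theory Submission
  imports Defs
begin

text \<open>On a one-hot target the cross-entropy is the negative log-likelihood of the true index.
  The joint prediction factorises as WTP times TII, so its negative log-likelihood is the sum of
  the WTP and TII losses pointwise, and by linearity also in expectation; the TAP loss is a
  negative log-probability and hence nonnegative.\<close>

lemma xent_onehot:
  assumes "finite I" "a \<in> I"
  shows "xent I (onehot a) q = - ln (q a)"
proof -
  have "(\<Sum>i\<in>I. onehot a i * ln (q i)) = (\<Sum>i\<in>I. if i = a then ln (q i) else 0)"
    by (rule sum.cong) (auto simp: onehot_def)
  also have "\<dots> = ln (q a)"
    using assms by (simp add: sum.delta')
  finally show ?thesis
    by (simp add: xent_def)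
qed

lemma is_distr_le_1:
  assumes "is_distr I q" "a \<in> I"
  shows "q a \<le> 1"
proof -
  have "q a \<le> sum q I"
    using assms unfolding is_distr_def by (intro member_le_sum) auto
  then show ?thesis
    using assms unfolding is_distr_def by simp
qed

lemma xent_onehot_nonneg:
  assumes "is_distr I q" "a \<in> I" "q a > 0"
  shows "0 \<le> xent I (onehot a) q"
proof -
  have "finite I"
    using assms(1) by (simp add: is_distr_def)
  then show ?thesis
    using assms is_distr_le_1 by (simp add: xent_onehot)
qed

lemma xent_onehot_Sigma_product:
  assumes "finite I" "\<And>i. i \<in> I \<Longrightarrow> finite (J i)" "a \<in> I" "b \<in> J a"
    and "w a b > 0" "p a > 0"
  shows "xent (SIGMA i:I. J i) (onehot (a, b)) (\<lambda>(i, j). w i j * p i)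
           = xent (J a) (onehot b) (w a) + xent I (onehot a) p"
proof -
  have "finite (SIGMA i:I. J i)" "(a, b) \<in> (SIGMA i:I. J i)"
    using assms(1-4) by auto
  then have "xent (SIGMA i:I. J i) (onehot (a, b)) (\<lambda>(i, j). w i j * p i) = - ln (w a b * p a)"
    by (simp add: xent_onehot)
  also have "\<dots> = - ln (w a b) - ln (p a)"
    using assms(5,6) by (simp add: ln_mult)
  finally show ?thesis
    using assms by (simp add: xent_onehot)
qed

lemma expectation_eq_add_AE:
  fixes f g h :: "'a \<Rightarrow> real"
  assumes "\<And>x. x \<in> set_pmf D \<Longrightarrow> f x = g x + h x"
    and "integrable (measure_pmf D) g" "integrable (measure_pmf D) h"
  shows "measure_pmf.expectation D f = measure_pmf.expectation D g + measure_pmf.expectation D h"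
proof -
  have "measure_pmf.expectation D f = measure_pmf.expectation D (\<lambda>x. g x + h x)"
    by (rule integral_cong_AE) (auto simp: AE_measure_pmf_iff assms(1))
  then show ?thesis
    using assms(2,3) by simp
qed

theorem theorem1:
  fixes t :: nat
    and nc :: "nat \<Rightarrow> nat"
    and lab :: "nat \<Rightarrow> nat \<Rightarrow> 'c"
    and D :: "'x pmf"
    and ti tj :: "'x \<Rightarrow> nat"
    and tii :: "'x \<Rightarrow> nat \<Rightarrow> real"
    and wtp :: "'x \<Rightarrow> nat \<Rightarrow> nat \<Rightarrow> real"
    and tap :: "'x \<Rightarrow> 'c \<Rightarrow> real"
    and \<delta> \<epsilon> \<eta> :: real
  defines "H_WTP \<equiv> (\<lambda>x. xent {1..nc (ti x)} (onehot (tj x)) (wtp x (ti x)))"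
    and "H_TII \<equiv> (\<lambda>x. xent {1..t} (onehot (ti x)) (tii x))"
    and "H_TAP \<equiv> (\<lambda>x. xent ((\<lambda>(i, j). lab i j) ` (SIGMA i:{1..t}. {1..nc i})) (onehot (lab (ti x) (tj x))) (tap x))"
    and "H_joint \<equiv> (\<lambda>x. xent (SIGMA i:{1..t}. {1..nc i}) (onehot (ti x, tj x)) (\<lambda>(i, j). wtp x i j * tii x i))"
  assumes labels_disjoint: "inj_on (\<lambda>(i, j). lab i j) (SIGMA i:{1..t}. {1..nc i})"
    and true_idx: "\<And>x. x \<in> set_pmf D \<Longrightarrow> ti x \<in> {1..t} \<and> tj x \<in> {1..nc (ti x)}"
    and tii_distr: "\<And>x. x \<in> set_pmf D \<Longrightarrow> is_distr {1..t} (tii x)"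
    and wtp_distr: "\<And>x i. x \<in> set_pmf D \<Longrightarrow> i \<in> {1..t} \<Longrightarrow> is_distr {1..nc i} (wtp x i)"
    and tap_distr: "\<And>x. x \<in> set_pmf D \<Longrightarrow> is_distr ((\<lambda>(i, j). lab i j) ` (SIGMA i:{1..t}. {1..nc i})) (tap x)"
    and tii_pos: "\<And>x. x \<in> set_pmf D \<Longrightarrow> tii x (ti x) > 0"
    and wtp_pos: "\<And>x. x \<in> set_pmf D \<Longrightarrow> wtp x (ti x) (tj x) > 0"
    and tap_pos: "\<And>x. x \<in> set_pmf D \<Longrightarrow> tap x (lab (ti x) (tj x)) > 0"
    and int_WTP: "integrable (measure_pmf D) H_WTP"
    and int_TII: "integrable (measure_pmf D) H_TII"
    and int_TAP: "integrable (measure_pmf D) H_TAP"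
    and WTP_bound: "measure_pmf.expectation D H_WTP \<le> \<delta>"
    and TII_bound: "measure_pmf.expectation D H_TII \<le> \<epsilon>"
    and TAP_bound: "measure_pmf.expectation D H_TAP \<le> \<eta>"
  shows "0 \<le> max (measure_pmf.expectation D H_joint) (measure_pmf.expectation D H_TAP)
       \<and> max (measure_pmf.expectation D H_joint) (measure_pmf.expectation D H_TAP)
           \<le> max (\<delta> + \<epsilon>) \<eta>"
proof -
  have "H_joint x = H_WTP x + H_TII x" if "x \<in> set_pmf D" for x
    unfolding H_joint_def H_WTP_def H_TII_def
    using true_idx[OF that] wtp_pos[OF that] tii_pos[OF that]
    by (intro xent_onehot_Sigma_product) auto
  then have "measure_pmf.expectation D H_joint
               = measure_pmf.expectation D H_WTP + measure_pmf.expectation D H_TII"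
    using int_WTP int_TII by (rule expectation_eq_add_AE)
  then have joint_bound: "measure_pmf.expectation D H_joint \<le> \<delta> + \<epsilon>"
    using WTP_bound TII_bound by simp
  have "0 \<le> H_TAP x" if "x \<in> set_pmf D" for x
    unfolding H_TAP_def
    using tap_distr[OF that] tap_pos[OF that] true_idx[OF that]
    by (intro xent_onehot_nonneg) force+
  then have "0 \<le> measure_pmf.expectation D H_TAP"
    by (intro integral_nonneg_AE) (simp add: AE_measure_pmf_iff)
  then show ?thesis
    using joint_bound TAP_bound by auto
qed

end
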